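(* Let $IS\in\{\Box,\blacksquare\}^2$ and let $\tau$ be a correct compositional translation from $\mathrm{SYNCSIMPLE}$ into $\mathrm{LOCKSIMPLE}_{2,IS}$ of blocking type $(P_iP_i,P_jP_j)$ with $i,j\in\{1,2\}$. Then $i\neq j$.
   Context: $\mathrm{SYNCSIMPLE}$: subprocesses $\mathcal{U} ::= \checkmark \mid 0 \mid\, !\mathcal{U} \mid\, ?\mathcal{U}$; processes are finite parallel compositions $\mathcal{U}_1\mid\cdots\mid\mathcal{U}_n$ ($\mid$ associative, commutative, $0$ a unit). Reduction: $!\mathcal{U}_1\mid ?\mathcal{U}_2\mid \mathcal{P}\to \mathcal{U}_1\mid\mathcal{U}_2\mid\mathcal{P}$. Successful: of form $\checkmark\mid\mathcal{P}$; may-convergent: reduces to a successful process; must-convergent: every reachable process is may-convergent. $\mathrm{LOCKSIMPLE}_{k,IS}$ ($IS\in\{\Box,\blacksquare\}^k$, $\Box$ empty, $\blacksquare$ full): subprocesses are words over $\{P_1,T_1,\dots,P_k,T_k\}$ followed by $0$ or $\checkmark$; states $(\mathcal{P},C)$ reduce by $(P_i\mathcal{U}\mid\mathcal{P},C)\to(\mathcal{U}\mid\mathcal{P},C[C_i:=\blacksquare])$ only if $C_i=\Box$, and $(T_i\mathcal{U}\mid\mathcal{P},C)\to(\mathcal{U}\mid\mathcal{P},C[C_i:=\Box])$ always. Success = process contains $\checkmark$; a process $\mathcal{P}$ is may/must-convergent iff the state $(\mathcal{P},IS)$ is (defined as in SYNCSIMPLE). A compositional translation $\tau$ is given by words $\tau(!),\tau(?)$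 with $\tau(0)=0$, $\tau(\checkmark)=\checkmark$, $\tau(!\mathcal{U})=\tau(!)\tau(\mathcal{U})$, $\tau(?\mathcal{U})=\tau(?)\tau(\mathcal{U})$, $\tau$ commuting with $\mid$; correct = preserves and reflects may- and must-convergence. Blocking type: for a word $S$ over $\{P_i,T_i\}$, run $S$ as a single subprocess from store $IS$. If it gets stuck at an occurrence of $P_i$ (lock $i$ full), the prefix ending with that occurrence is the blocking prefix; if that occurrence is the first symbol of $\{P_i,T_i\}$ in $S$ (prefix of form $RP_i$, $R$ without $P_i,T_i$) the blocking type of $S$ is $P_i$, otherwise the blocking prefix has form $R_1P_iR_2P_i$ with $R_2$ containing no $P_i,T_i$ and the blocking type is $P_iP_i$. $\tau$ has blocking type $(W_1,W_2)$ if $W_1$ is the blocking type of $\tau(!)$ and $W_2$ that of $\tau(?)$. *)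

theory Defs
  imports Main "HOL-Library.Multiset"
begin

datatype ssub = SSucc | SNil | SSend ssub | SRecv ssub

type_synonym sproc = "ssub multiset"

definition sred :: "sproc \<Rightarrow> sproc \<Rightarrow> bool" where
  "sred P Q \<longleftrightarrow> (\<exists>U1 U2 R. P = {#SSend U1, SRecv U2#} + R \<and> Q = {#U1, U2#} + R)"

definition ssuccessful :: "sproc \<Rightarrow> bool" where
  "ssuccessful P \<longleftrightarrow> SSucc \<in># P"

definition smay :: "sproc \<Rightarrow> bool" where
  "smay P \<longleftrightarrow> (\<exists>Q. sred\<^sup>*\<^sup>* P Q \<and> ssuccessful Q)"

definition smust :: "sproc \<Rightarrow> bool" where
  "smust P \<longleftrightarrow> (\<forall>Q. sred\<^sup>*\<^sup>* P Q \<longrightarrow> smay Q)"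

datatype lsym = LP nat | LT nat

fun lidx :: "lsym \<Rightarrow> nat" where
  "lidx (LP i) = i" | "lidx (LT i) = i"

text \<open>A subprocess is a word followed by 0 (False) or the success symbol (True).
  A store maps lock indices to True (full) or False (empty).\<close>
type_synonym lsub = "lsym list \<times> bool"
type_synonym lproc = "lsub multiset"
type_synonym store = "nat \<Rightarrow> bool"

definition lred :: "lproc \<times> store \<Rightarrow> lproc \<times> store \<Rightarrow> bool" where
  "lred S S' \<longleftrightarrow> (\<exists>i w b R.
      (fst S = {#(LP i # w, b)#} + R \<and> \<not> snd S i \<and>
         S' = ({#(w, b)#} + R, (snd S)(i := True))) \<or>
      (fst S = {#(LT i # w, b)#} + R \<and>
         S' = ({#(w, b)#} + R, (snd S)(i := False))))"

definition lsuccessful :: "lproc \<times> store \<Rightarrow> bool" where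
  "lsuccessful S \<longleftrightarrow> ([], True) \<in># fst S"

definition lmay_state :: "lproc \<times> store \<Rightarrow> bool" where
  "lmay_state S \<longleftrightarrow> (\<exists>S'. lred\<^sup>*\<^sup>* S S' \<and> lsuccessful S')"

definition lmust_state :: "lproc \<times> store \<Rightarrow> bool" where
  "lmust_state S \<longleftrightarrow> (\<forall>S'. lred\<^sup>*\<^sup>* S S' \<longrightarrow> lmay_state S')"

definition lmay :: "store \<Rightarrow> lproc \<Rightarrow> bool" where
  "lmay IS P \<longleftrightarrow> lmay_state (P, IS)"

definition lmust :: "store \<Rightarrow> lproc \<Rightarrow> bool" where
  "lmust IS P \<longleftrightarrow> lmust_state (P, IS)"

text \<open>A compositional translation is given by the two words tau(!) = ws, tau(?) = wr.\<close>
fun trans_sub :: "lsym list \<Rightarrow> lsym list \<Rightarrow> ssub \<Rightarrow> lsub" where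
  "trans_sub ws wr SSucc = ([], True)"
| "trans_sub ws wr SNil = ([], False)"
| "trans_sub ws wr (SSend U) = (ws @ fst (trans_sub ws wr U), snd (trans_sub ws wr U))"
| "trans_sub ws wr (SRecv U) = (wr @ fst (trans_sub ws wr U), snd (trans_sub ws wr U))"

definition trans_proc :: "lsym list \<Rightarrow> lsym list \<Rightarrow> sproc \<Rightarrow> lproc" where
  "trans_proc ws wr P = image_mset (trans_sub ws wr) P"

definition valid_word :: "nat \<Rightarrow> lsym list \<Rightarrow> bool" where
  "valid_word k w \<longleftrightarrow> (\<forall>x\<in>set w. 1 \<le> lidx x \<and> lidx x \<le> k)"

definition correct_translation :: "nat \<Rightarrow> store \<Rightarrow> lsym list \<Rightarrow> lsym list \<Rightarrow> bool" where
  "correct_translation k IS ws wr \<longleftrightarrow> valid_word k ws \<and> valid_word k wr \<and>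
     (\<forall>P. smay P \<longleftrightarrow> lmay IS (trans_proc ws wr P)) \<and>
     (\<forall>P. smust P \<longleftrightarrow> lmust IS (trans_proc ws wr P))"

text \<open>Running a word as a single subprocess; None = stuck.\<close>
fun exec :: "store \<Rightarrow> lsym list \<Rightarrow> store option" where
  "exec C [] = Some C"
| "exec C (LP i # w) = (if C i then None else exec (C(i := True)) w)"
| "exec C (LT i # w) = exec (C(i := False)) w"

definition blocking_prefix :: "store \<Rightarrow> lsym list \<Rightarrow> lsym list \<Rightarrow> bool" where
  "blocking_prefix IS S bp \<longleftrightarrow> (\<exists>pre i C rest. bp = pre @ [LP i] \<and> S = bp @ rest \<and>
      exec IS pre = Some C \<and> C i)"

definition blocking_type_P :: "store \<Rightarrow> lsym list \<Rightarrow> nat \<Rightarrow> bool" where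
  "blocking_type_P IS S i \<longleftrightarrow> (\<exists>R. blocking_prefix IS S (R @ [LP i]) \<and>
      (\<forall>x\<in>set R. x \<noteq> LP i \<and> x \<noteq> LT i))"

definition blocking_type_PP :: "store \<Rightarrow> lsym list \<Rightarrow> nat \<Rightarrow> bool" where
  "blocking_type_PP IS S i \<longleftrightarrow> (\<exists>R1 R2. blocking_prefix IS S (R1 @ [LP i] @ R2 @ [LP i]) \<and>
      (\<forall>x\<in>set R2. x \<noteq> LP i \<and> x \<noteq> LT i))"

end

theory Submission
  imports Defs
begin

(* Since !\<checkmark> | ?\<checkmark> is must-convergent, no run of tau(!)\<checkmark> | tau(?)\<checkmark>
   may reach a state in which both subprocesses wait at a P on a full lock. Suppose both words
   block on a second P_i. Run tau(!) up to its blocking P_i. The part of a blocking prefix before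
   its last P_i accesses lock i, so it leaves lock i full from any store. Hence tau(?) gets stuck
   no later than its own blocking P_i, and not on lock i (that would be a deadlock), i.e. at a
   P_l on the other lock l. The prefix p of tau(?) before this P_l accesses lock i but not l, so
   run from the initial store it leaves both locks empty; symmetrically, the blocking prefix of
   tau(!) contains a P_l. Now run p first and then the blocking prefix of tau(!): it cannot block
   earlier than from the initial store, and it leaves both locks full while tau(!) waits at P_i
   and tau(?) at P_l, a deadlock. *)

lemma exec_append:
  "exec C (u @ v) = (case exec C u of None \<Rightarrow> None | Some C' \<Rightarrow> exec C' v)"
  by (induction C u rule: exec.induct) (simp_all add: fun_upd_def)

lemma exec_append_SomeE:
  assumes "exec C (u @ v) = Some C''"
  obtains C' where "exec C u = Some C'" and "exec C' v = Some C''"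
  using assms by (auto simp: exec_append split: option.splits)

lemma exec_untouched:
  "exec C w = Some C' \<Longrightarrow> k \<notin> lidx ` set w \<Longrightarrow> C' k = C k"
  by (induction C w rule: exec.induct) (auto split: if_splits)

lemma exec_touched:
  "exec C w = Some C' \<Longrightarrow> exec D w = Some D' \<Longrightarrow> k \<in> lidx ` set w \<Longrightarrow> C' k = D' k"
proof (induction w arbitrary: C D)
  case Nil
  then show ?case by simp
next
  case (Cons a w)
  then show ?case
    by (cases "k \<in> lidx ` set w"; cases a) (auto simp: exec_untouched split: if_splits)
qed

lemma exec_mono:
  "exec C w = Some C' \<Longrightarrow> D \<le> C \<Longrightarrow> \<exists>D'. exec D w = Some D' \<and> D' \<le> C'"
proof (induction w arbitrary: C D)
  case Nil
  then show ?case by simp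
next
  case (Cons a w)
  have "D(lidx a := b) \<le> C(lidx a := b)" for b
    using Cons.prems(2) by (simp add: le_fun_def)
  with Cons show ?case
    by (cases a) (auto simp: le_fun_def split: if_splits)
qed

lemma exec_le_if_touched_empty:
  assumes "exec C w = Some C'" and "\<forall>k\<in>lidx ` set w. \<not> C' k"
  shows "C' \<le> C"
proof (rule le_funI)
  fix k
  show "C' k \<le> C k"
    using assms exec_untouched[OF assms(1), of k] by (cases "k \<in> lidx ` set w") auto
qed

lemma exec_NoneE:
  assumes "exec C w = None"
  obtains p k y C' where "w = p @ LP k # y" and "exec C p = Some C'" and "C' k"
  using assms
proof (induction C w arbitrary: thesis rule: exec.induct)
  case (2 C i w)
  show ?case
  proof (cases "C i")
    case True
    then show ?thesis using "2.prems"(1)[of "[]"] by simp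
  next
    case False
    then show ?thesis using 2 by (metis Cons_eq_appendI exec.simps(2))
  qed
next
  case (3 C i w)
  then show ?case by (metis Cons_eq_appendI exec.simps(3))
qed simp

lemma lred_rtranclp_exec:
  "exec C w = Some C' \<Longrightarrow> lred\<^sup>*\<^sup>* (add_mset (w @ x, b) R, C) (add_mset (x, b) R, C')"
proof (induction w arbitrary: C)
  case Nil
  then show ?case by simp
next
  case (Cons a w)
  obtain D where D: "exec D w = Some C'"
    and step: "lred (add_mset (a # w @ x, b) R, C) (add_mset (w @ x, b) R, D)"
  proof (cases a)
    case (LP i)
    with Cons.prems show ?thesis
      by (intro that[of "C(i := True)"]) (auto simp: lred_def split: if_splits)
  next
    case (LT i)
    with Cons.prems show ?thesis
      by (intro that[of "C(i := False)"]) (auto simp: lred_def)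
  qed
  show ?case
    using converse_rtranclp_into_rtranclp[OF step Cons.IH[OF D]] by simp
qed

lemma lred_rtranclp_exec_both:
  assumes "exec C u = Some C'" and "exec C' v = Some C''"
  shows "lred\<^sup>*\<^sup>* ({#(u @ x, b), (v @ y, c)#}, C) ({#(x, b), (y, c)#}, C'')"
proof -
  have "lred\<^sup>*\<^sup>* ({#(u @ x, b), (v @ y, c)#}, C) ({#(x, b), (v @ y, c)#}, C')"
    using lred_rtranclp_exec[OF assms(1), of x b "{#(v @ y, c)#}"] by simp
  also have "lred\<^sup>*\<^sup>* \<dots> ({#(x, b), (y, c)#}, C'')"
    using lred_rtranclp_exec[OF assms(2), of y c "{#(x, b)#}"] by (simp add: add_mset_commute)
  finally show ?thesis .
qed

lemma not_lred_both_blocked: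
  assumes "C k" and "C l"
  shows "\<not> lred ({#(LP k # x, b), (LP l # y, c)#}, C) S"
  using assms by (auto simp: lred_def add_eq_conv_ex)

lemma not_lmay_state_both_blocked:
  assumes "C k" and "C l"
  shows "\<not> lmay_state ({#(LP k # x, b), (LP l # y, c)#}, C)"
proof
  assume "lmay_state ({#(LP k # x, b), (LP l # y, c)#}, C)"
  then obtain S where "lred\<^sup>*\<^sup>* ({#(LP k # x, b), (LP l # y, c)#}, C) S" and "lsuccessful S"
    unfolding lmay_state_def by blast
  then show False
    using not_lred_both_blocked[OF assms] by (cases rule: converse_rtranclpE) (auto simp: lsuccessful_def)
qed

lemma lmust_state_no_deadlock:
  assumes "lmust_state ({#(u @ LP k # x, b), (v @ LP l # y, c)#}, C)"
    and "exec C u = Some C'" and "exec C' v = Some C''"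
  shows "\<not> (C'' k \<and> C'' l)"
  using assms lred_rtranclp_exec_both[OF assms(2,3)] not_lmay_state_both_blocked
  unfolding lmust_state_def by blast

lemma sred_send_recv_succ:
  "sred {#SSend SSucc, SRecv SSucc#} Q \<longleftrightarrow> Q = {#SSucc, SSucc#}"
  by (auto simp: sred_def add_eq_conv_ex)

lemma not_sred_succ_succ: "\<not> sred {#SSucc, SSucc#} Q"
  by (auto simp: sred_def add_eq_conv_ex)

lemma smust_send_recv_succ: "smust {#SSend SSucc, SRecv SSucc#}"
proof -
  have may_succ: "smay {#SSucc, SSucc#}"
    by (auto simp: smay_def ssuccessful_def)
  have "sred\<^sup>*\<^sup>* {#SSend SSucc, SRecv SSucc#} {#SSucc, SSucc#}"
    by (intro r_into_rtranclp) (simp add: sred_send_recv_succ)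
  then have "smay {#SSend SSucc, SRecv SSucc#}"
    using may_succ unfolding smay_def by (meson rtranclp_trans)
  moreover have "Q = {#SSucc, SSucc#}" if "sred\<^sup>*\<^sup>* {#SSucc, SSucc#} Q" for Q
    using that not_sred_succ_succ by (cases rule: converse_rtranclpE) auto
  ultimately show ?thesis
    unfolding smust_def using may_succ sred_send_recv_succ by (metis converse_rtranclpE)
qed

lemma correct_translation_lmust_state:
  assumes "correct_translation k IS ws wr"
  shows "lmust_state ({#(ws, True), (wr, True)#}, IS)"
proof -
  have "trans_proc ws wr {#SSend SSucc, SRecv SSucc#} = {#(ws, True), (wr, True)#}"
    by (simp add: trans_proc_def)
  then show ?thesis
    using assms smust_send_recv_succ unfolding correct_translation_def lmust_def by metis
qed

lemma blocking_type_PPE: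
  assumes "blocking_type_PP IS w i"
  obtains p r C where "w = p @ LP i # r" and "exec IS p = Some C" and "C i"
    and "i \<in> lidx ` set p"
proof -
  obtain R1 R2 i' pre C rest where
    "R1 @ [LP i] @ R2 @ [LP i] = pre @ [LP i']" "w = (R1 @ [LP i] @ R2 @ [LP i]) @ rest"
    "exec IS pre = Some C" "C i'"
    using assms unfolding blocking_type_PP_def blocking_prefix_def by blast
  then show ?thesis
    by (intro that[of "R1 @ [LP i] @ R2" rest C]) force+
qed

lemma lmust_state_partner_blocks_on_other_lock:
  assumes must: "lmust_state ({#(a, s), (b, t)#}, IS)"
    and locks: "lidx ` set b \<subseteq> {i, l}" and "l \<noteq> i"
    and a: "a = pa @ LP i # ra" "exec IS pa = Some Ca" "Ca i"
    and b: "b = pb @ LP i # rb" "exec IS pb = Some Cb" "Cb i" "i \<in> lidx ` set pb"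
  obtains p z E where "pb = p @ LP l # z" and "exec IS p = Some E" and "\<not> E i" and "\<not> E l"
    and "Ca l"
proof -
  have "exec Ca (pb @ [LP i]) = None"
  proof (cases "exec Ca pb")
    case (Some D)
    then have "D i" using exec_touched[OF Some b(2) b(4)] b(3) by simp
    with Some show ?thesis by (simp add: exec_append)
  qed (simp add: exec_append)
  then obtain p k y C2 where p: "pb @ [LP i] = p @ LP k # y" "exec Ca p = Some C2" "C2 k"
    by (rule exec_NoneE)
  have "b = p @ LP k # y @ rb"
    using b(1) p(1) by (metis append.assoc append_Cons append_Nil)
  then have "\<not> C2 i"
    using lmust_state_no_deadlock[OF _ a(2) p(2)] must a(1) p(3) by metis
  with p(3) have "k \<noteq> i" by blast
  then obtain z where pb: "pb = p @ LP k # z"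
    using p(1) by (cases y rule: rev_cases) auto
  with b(1) locks \<open>k \<noteq> i\<close> have "k = l" by auto
  obtain E where E: "exec IS p = Some E" "exec E (LP l # z) = Some Cb"
    using b(2) pb \<open>k = l\<close> by (auto elim: exec_append_SomeE)
  then have "\<not> E l" by (auto split: if_splits)
  have "i \<in> lidx ` set p"
    using exec_untouched[OF p(2)] \<open>\<not> C2 i\<close> a(3) by blast
  then have "\<not> E i"
    using exec_touched[OF E(1) p(2)] \<open>\<not> C2 i\<close> by simp
  have "l \<notin> lidx ` set p"
    using exec_touched[OF E(1) p(2)] \<open>\<not> E l\<close> p(3) \<open>k = l\<close> by blast
  then have "Ca l"
    using exec_untouched[OF p(2)] p(3) \<open>k = l\<close> by simp
  show ?thesis
    using that pb \<open>k = l\<close> E(1) \<open>\<not> E i\<close> \<open>\<not> E l\<close> \<open>Ca l\<close> by blast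
qed

theorem proposition5p1:
  fixes IS :: store and ws wr :: "lsym list" and i j :: nat
  assumes "correct_translation 2 IS ws wr"
    and "i \<in> {1, 2}" and "j \<in> {1, 2}"
    and "blocking_type_PP IS ws i"
    and "blocking_type_PP IS wr j"
  shows "i \<noteq> j"
proof
  assume "i = j"
  define l where "l = 3 - i"
  have "l \<noteq> i" and locks: "{1, 2} = {i, l}"
    using assms(2) by (auto simp: l_def)
  have valid: "lidx ` set ws \<subseteq> {i, l}" "lidx ` set wr \<subseteq> {i, l}"
    using assms(1) unfolding locks[symmetric] correct_translation_def valid_word_def by force+
  have must: "lmust_state ({#(ws, True), (wr, True)#}, IS)"
    and must': "lmust_state ({#(wr, True), (ws, True)#}, IS)"
    using correct_translation_lmust_state[OF assms(1)] by (simp_all add: add_mset_commute)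
  obtain pa ra Ca where ws: "ws = pa @ LP i # ra" "exec IS pa = Some Ca" "Ca i" "i \<in> lidx ` set pa"
    using assms(4) by (rule blocking_type_PPE)
  obtain pb rb Cb where wr: "wr = pb @ LP i # rb" "exec IS pb = Some Cb" "Cb i" "i \<in> lidx ` set pb"
    using assms(5) \<open>i = j\<close> by (auto elim: blocking_type_PPE)
  obtain p z E where p: "pb = p @ LP l # z" "exec IS p = Some E" "\<not> E i" "\<not> E l" "Ca l"
    using lmust_state_partner_blocks_on_other_lock[OF must valid(2) \<open>l \<noteq> i\<close> ws(1-3) wr] .
  obtain q z' where "pa = q @ LP l # z'"
    using lmust_state_partner_blocks_on_other_lock[OF must' valid(1) \<open>l \<noteq> i\<close> wr(1-3) ws] .
  have "E \<le> IS"
    using exec_le_if_touched_empty[OF p(2)] p(1,3,4) valid(2) wr(1) by auto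
  then obtain Ca' where Ca': "exec E pa = Some Ca'"
    using exec_mono[OF ws(2)] by blast
  have "Ca' i" "Ca' l"
    using exec_touched[OF Ca' ws(2)] ws(3,4) p(5) \<open>pa = q @ LP l # z'\<close> by auto
  moreover have "wr = p @ LP l # z @ LP i # rb"
    using wr(1) p(1) by simp
  ultimately show False
    using lmust_state_no_deadlock[OF _ p(2) Ca'] must' ws(1) by blast
qed

end
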